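(* The construction sending each homogeneous and finitely generated operad $\mathcal{O}$ to its prefix poset $(\mathcal{O}_\bullet,\preceq)$ and each operad morphism $\psi:\mathcal{O}\to\mathcal{O}'$ between homogeneous and finitely generated operads to the same underlying map $\mathcal{O}_\bullet\to\mathcal{O}'_\bullet$ is a functor from the category of homogeneous and finitely generated operads to the category of posets (in particular every such $\psi$ is order-preserving: $x\preceq y$ implies $\psi(x)\preceq\psi(y)$), and this functor preserves injections and surjections.
   Context: Operads are nonsymmetric set-operads: a graded set $\mathcal{O}=\bigsqcup_{n}\mathcal{O}(n)$ (elements of $\mathcal{O}(n)$ have arity $n$) with partial compositions $\circ_i:\mathcal{O}(n)\times\mathcal{O}(m)\to\mathcal{O}(n+m-1)$, $i\in[n]$, and a unit $\mathbf{1}\in\mathcal{O}(1)$, satisfying the usual associativity, commutativity and unit axioms; operad morphisms preserve arity, unit and partial compositions. If $\mathcal{O}(0)=\emptyset$ and $\mathcal{O}(1)=\{\mathbf{1}\}$, $\mathcal{O}$ has a unique minimal (for inclusion) generating set $\mathfrak{G}_\mathcal{O}$. A treelike expression of $x\in\mathcal{O}$ is a planar rooted tree with internal nodes of arity $k$ decorated by elements of $\mathfrak{G}_\mathcal{O}$ of arity $k$ which evaluates to $x$ when the nodes are composed in $\mathcal{O}$. $\mathcal{O}$ is homogeneous if $\mathcal{O}(0)=\emptyset$, $\mathcal{O}(1)=\{\mathbf{1}\}$ and any two treelike expressions of the same element have the same number of internal nodes; this number is the degree of the element, and $\mathcal{O}_\bullet$ denotes $\mathcal{O}$ graded by degree.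 $\mathcal{O}$ is finitely generated if $\mathfrak{G}_\mathcal{O}$ is finite. The prefix poset of $\mathcal{O}$ is $(\mathcal{O}_\bullet,\preceq)$ where $x\preceq y$ iff $y=(\cdots((x\circ_{i_1}\mathtt{a}_1)\circ_{i_2}\mathtt{a}_2)\cdots)\circ_{i_k}\mathtt{a}_k$ for some $k\ge0$, $\mathtt{a}_1,\dots,\mathtt{a}_k\in\mathfrak{G}_\mathcal{O}$ and positive integers $i_1,\dots,i_k$. *)

theory Defs
  imports Main
begin

text \<open>A nonsymmetric set-operad, given by its carrier, arity function,
partial compositions (pcomp i x y = x \<circ>_i y, i counted from 1) and unit.\<close>

record 'a operad =
  ocarrier :: "'a set"
  oar :: "'a \<Rightarrow> nat"
  ocomp :: "nat \<Rightarrow> 'a \<Rightarrow> 'a \<Rightarrow> 'a"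
  ounit :: 'a

definition is_operad :: "('a, 'b) operad_scheme \<Rightarrow> bool" where
  "is_operad P \<longleftrightarrow>
     ounit P \<in> ocarrier P \<and> oar P (ounit P) = 1 \<and>
     (\<forall>x\<in>ocarrier P. \<forall>y\<in>ocarrier P. \<forall>i. 1 \<le> i \<and> i \<le> oar P x \<longrightarrow>
        ocomp P i x y \<in> ocarrier P \<and> oar P (ocomp P i x y) = oar P x + oar P y - 1) \<and>
     (\<forall>x\<in>ocarrier P. \<forall>y\<in>ocarrier P. \<forall>z\<in>ocarrier P. \<forall>i j.
        1 \<le> i \<and> i \<le> oar P x \<and> 1 \<le> j \<and> j \<le> oar P y \<longrightarrow>
        ocomp P (i + j - 1) (ocomp P i x y) z = ocomp P i x (ocomp P j y z)) \<and>
     (\<forall>x\<in>ocarrier P. \<forall>y\<in>ocarrier P. \<forall>z\<in>ocarrier P. \<forall>i j.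
        1 \<le> i \<and> i < j \<and> j \<le> oar P x \<longrightarrow>
        ocomp P (j + oar P y - 1) (ocomp P i x y) z = ocomp P i (ocomp P j x z) y) \<and>
     (\<forall>x\<in>ocarrier P. ocomp P 1 (ounit P) x = x) \<and>
     (\<forall>x\<in>ocarrier P. \<forall>i. 1 \<le> i \<and> i \<le> oar P x \<longrightarrow> ocomp P i x (ounit P) = x)"

definition operad_hom ::
  "('a, 'c) operad_scheme \<Rightarrow> ('b, 'd) operad_scheme \<Rightarrow> ('a \<Rightarrow> 'b) \<Rightarrow> bool" where
  "operad_hom P Q \<psi> \<longleftrightarrow>
     (\<forall>x\<in>ocarrier P. \<psi> x \<in> ocarrier Q \<and> oar Q (\<psi> x) = oar P x) \<and>
     \<psi> (ounit P) = ounit Q \<and>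
     (\<forall>x\<in>ocarrier P. \<forall>y\<in>ocarrier P. \<forall>i. 1 \<le> i \<and> i \<le> oar P x \<longrightarrow>
        \<psi> (ocomp P i x y) = ocomp Q i (\<psi> x) (\<psi> y))"

datatype 'a ptree = Leaf | Node 'a "'a ptree list"

text \<open>Full composition x \<circ> (y1,...,yk) by partial compositions at positions k, k-1, ..., 1.\<close>

definition full_comp :: "('a, 'b) operad_scheme \<Rightarrow> 'a \<Rightarrow> 'a list \<Rightarrow> 'a" where
  "full_comp P x ys =
     fold (\<lambda>(i, y) acc. ocomp P (Suc i) acc y) (rev (zip [0..<length ys] ys)) x"

fun eval_tree :: "('a, 'b) operad_scheme \<Rightarrow> 'a ptree \<Rightarrow> 'a" where
  "eval_tree P Leaf = ounit P"
| "eval_tree P (Node g ts) = full_comp P g (map (eval_tree P) ts)"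

fun tree_over :: "('a, 'b) operad_scheme \<Rightarrow> 'a set \<Rightarrow> 'a ptree \<Rightarrow> bool" where
  "tree_over P G Leaf = True"
| "tree_over P G (Node g ts) =
     (g \<in> G \<and> oar P g = length ts \<and> (\<forall>t\<in>set ts. tree_over P G t))"

fun inner_nodes :: "'a ptree \<Rightarrow> nat" where
  "inner_nodes Leaf = 0"
| "inner_nodes (Node g ts) = Suc (sum_list (map inner_nodes ts))"

definition generates :: "('a, 'b) operad_scheme \<Rightarrow> 'a set \<Rightarrow> bool" where
  "generates P G \<longleftrightarrow> G \<subseteq> ocarrier P \<and>
     (\<forall>x\<in>ocarrier P. \<exists>t. tree_over P G t \<and> eval_tree P t = x)"

definition minimal_generating :: "('a, 'b) operad_scheme \<Rightarrow> 'a set \<Rightarrow> bool" where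
  "minimal_generating P G \<longleftrightarrow> generates P G \<and>
     (\<forall>H. H \<subseteq> G \<and> generates P H \<longrightarrow> H = G)"

text \<open>The unique minimal generating set (meaningful when P(0) is empty and P(1) = {1}).\<close>

definition gens :: "('a, 'b) operad_scheme \<Rightarrow> 'a set" where
  "gens P = (THE G. minimal_generating P G)"

definition homogeneous :: "('a, 'b) operad_scheme \<Rightarrow> bool" where
  "homogeneous P \<longleftrightarrow>
     (\<forall>x\<in>ocarrier P. oar P x \<noteq> 0) \<and>
     {x \<in> ocarrier P. oar P x = 1} = {ounit P} \<and>
     (\<forall>s t. tree_over P (gens P) s \<and> tree_over P (gens P) t \<and>
            eval_tree P s = eval_tree P t \<longrightarrow> inner_nodes s = inner_nodes t)"

definition finitely_generated :: "('a, 'b) operad_scheme \<Rightarrow> bool" where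
  "finitely_generated P \<longleftrightarrow> finite (gens P)"

inductive prefix_le :: "('a, 'b) operad_scheme \<Rightarrow> 'a \<Rightarrow> 'a \<Rightarrow> bool" for P where
  refl: "x \<in> ocarrier P \<Longrightarrow> prefix_le P x x"
| step: "prefix_le P x y \<Longrightarrow> a \<in> gens P \<Longrightarrow> 1 \<le> i \<Longrightarrow> i \<le> oar P y
           \<Longrightarrow> prefix_le P x (ocomp P i y a)"

definition prefix_rel :: "('a, 'b) operad_scheme \<Rightarrow> 'a rel" where
  "prefix_rel P = {(x, y). prefix_le P x y}"

end

theory Submission
  imports Defs
begin

text \<open>Then the minimal
generating set consists exactly of the indecomposable elements: those of arity at least 2 that
are not a partial composition of two elements of arity at least 2. Composing with a generator
strictly raises the arity, which makes the prefix order antisymmetric. A morphism sends a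
generator \<open>a\<close> to an arbitrary element \<open>\<psi> a\<close>; but grafting any element \<open>b\<close> onto \<open>y\<close> yields
an element above \<open>y\<close>: unless \<open>b\<close> is the unit or a generator, it is a composite of two elements
of smaller arity, and associativity turns grafting \<open>b\<close> into grafting these one after the other.\<close>

fun leaves :: "'a ptree \<Rightarrow> nat" where
  "leaves Leaf = 1"
| "leaves (Node g ts) = sum_list (map leaves ts)"

text \<open>\<open>graft t j s\<close> plugs \<open>s\<close> into the \<open>j\<close>-th leaf of \<open>t\<close>, leaves numbered from 1 on the left.\<close>

fun graft :: "'a ptree \<Rightarrow> nat \<Rightarrow> 'a ptree \<Rightarrow> 'a ptree"
and graft_list :: "'a ptree list \<Rightarrow> nat \<Rightarrow> 'a ptree \<Rightarrow> 'a ptree list" where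
  "graft Leaf j s = s"
| "graft (Node g ts) j s = Node g (graft_list ts j s)"
| "graft_list [] j s = []"
| "graft_list (t # ts) j s =
     (if j \<le> leaves t then graft t j s # ts else t # graft_list ts (j - leaves t) s)"

lemma graft_list_split:
  assumes "1 \<le> j" "j \<le> sum_list (map leaves ts)"
  shows "\<exists>as t bs j'. ts = as @ t # bs \<and> graft_list ts j s = as @ graft t j' s # bs \<and>
           j = sum_list (map leaves as) + j' \<and> 1 \<le> j' \<and> j' \<le> leaves t"
  using assms
proof (induction ts arbitrary: j)
  case Nil
  then show ?case by simp
next
  case (Cons t ts)
  show ?case
  proof (cases "j \<le> leaves t")
    case True
    then show ?thesis
      using Cons.prems by (intro exI[of _ "[]"] exI[of _ t] exI[of _ ts] exI[of _ j]) auto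
  next
    case False
    with Cons.prems have "1 \<le> j - leaves t" "j - leaves t \<le> sum_list (map leaves ts)"
      by auto
    then obtain as t' bs j' where
      "ts = as @ t' # bs" "graft_list ts (j - leaves t) s = as @ graft t' j' s # bs"
      "j - leaves t = sum_list (map leaves as) + j'" "1 \<le> j'" "j' \<le> leaves t'"
      using Cons.IH by blast
    with False show ?thesis
      by (intro exI[of _ "t # as"] exI[of _ t'] exI[of _ bs] exI[of _ j']) auto
  qed
qed

lemma graft_list_append:
  "1 \<le> j \<Longrightarrow> graft_list (as @ ts) (sum_list (map leaves as) + j) s = as @ graft_list ts j s"
  by (induction as) auto

lemma length_graft_list [simp]: "length (graft_list ts j s) = length ts"
  by (induction ts arbitrary: j) auto

lemma tree_over_graft:
  "tree_over P G t \<Longrightarrow> tree_over P G s \<Longrightarrow> tree_over P G (graft t j s)"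
  and
  "\<forall>t\<in>set ts. tree_over P G t \<Longrightarrow> tree_over P G s \<Longrightarrow>
   \<forall>t\<in>set (graft_list ts j s). tree_over P G t"
  by (induction t j s and ts j s rule: graft_graft_list.induct) auto

lemma length_le_sum_leaves: "\<forall>t\<in>set ts. 1 \<le> leaves t \<Longrightarrow> length ts \<le> sum_list (map leaves ts)"
  by (induction ts) auto

lemma prefix_le_trans:
  assumes "prefix_le P x y" "prefix_le P y z"
  shows "prefix_le P x z"
  using assms(2,1) by induction (auto intro: prefix_le.step)

locale reduced_operad =
  fixes P :: "('a, 'b) operad_scheme"
  assumes is_operad: "is_operad P"
    and arity_nonzero: "\<forall>x\<in>ocarrier P. oar P x \<noteq> 0"
    and arity_one: "{x \<in> ocarrier P. oar P x = 1} = {ounit P}"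
begin

abbreviation "C \<equiv> ocarrier P"
abbreviation "ar \<equiv> oar P"
abbreviation "pc \<equiv> ocomp P"
abbreviation "u \<equiv> ounit P"

lemma unit_in_carrier: "u \<in> C"
  and arity_unit: "ar u = 1"
  using is_operad unfolding is_operad_def by auto

lemma pc_in_carrier: "x \<in> C \<Longrightarrow> y \<in> C \<Longrightarrow> 1 \<le> i \<Longrightarrow> i \<le> ar x \<Longrightarrow> pc i x y \<in> C"
  and arity_pc: "x \<in> C \<Longrightarrow> y \<in> C \<Longrightarrow> 1 \<le> i \<Longrightarrow> i \<le> ar x \<Longrightarrow> ar (pc i x y) = ar x + ar y - 1"
  using is_operad unfolding is_operad_def by auto

lemma pc_assoc:
  "x \<in> C \<Longrightarrow> y \<in> C \<Longrightarrow> z \<in> C \<Longrightarrow> 1 \<le> i \<Longrightarrow> i \<le> ar x \<Longrightarrow> 1 \<le> j \<Longrightarrow> j \<le> ar y \<Longrightarrow>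
   pc (i + j - 1) (pc i x y) z = pc i x (pc j y z)"
  using is_operad unfolding is_operad_def by blast

lemma pc_commute:
  "x \<in> C \<Longrightarrow> y \<in> C \<Longrightarrow> z \<in> C \<Longrightarrow> 1 \<le> i \<Longrightarrow> i < j \<Longrightarrow> j \<le> ar x \<Longrightarrow>
   pc (j + ar y - 1) (pc i x y) z = pc i (pc j x z) y"
  using is_operad unfolding is_operad_def by blast

lemma pc_unit_left: "x \<in> C \<Longrightarrow> pc (Suc 0) u x = x"
  and pc_unit_right: "x \<in> C \<Longrightarrow> 1 \<le> i \<Longrightarrow> i \<le> ar x \<Longrightarrow> pc i x u = x"
  using is_operad unfolding is_operad_def by auto

lemma arity_pos: "x \<in> C \<Longrightarrow> 1 \<le> ar x"
  using arity_nonzero by (simp add: Suc_le_eq)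

lemma arity_eq_one_iff: "x \<in> C \<Longrightarrow> ar x = 1 \<longleftrightarrow> x = u"
  using arity_one arity_unit by blast

lemma arity_ge_two: "x \<in> C \<Longrightarrow> x \<noteq> u \<Longrightarrow> 2 \<le> ar x"
  using arity_pos arity_eq_one_iff by fastforce

lemma full_comp_Nil [simp]: "full_comp P x [] = x"
  by (simp add: full_comp_def)

lemma full_comp_snoc: "full_comp P x (ys @ [y]) = full_comp P (pc (Suc (length ys)) x y) ys"
  by (simp add: full_comp_def)

lemma full_comp_closed:
  "set ys \<subseteq> C \<Longrightarrow> x \<in> C \<Longrightarrow> length ys \<le> ar x \<Longrightarrow>
   full_comp P x ys \<in> C \<and> ar (full_comp P x ys) = ar x + sum_list (map ar ys) - length ys"
proof (induction ys arbitrary: x rule: rev_induct)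
  case Nil
  then show ?case by simp
next
  case (snoc y ys)
  then have "y \<in> C" by simp
  with snoc.prems have "pc (Suc (length ys)) x y \<in> C"
      "ar (pc (Suc (length ys)) x y) = ar x + ar y - 1" "1 \<le> ar y"
    using pc_in_carrier arity_pc arity_pos by auto
  with snoc.prems show ?case
    using snoc.IH[of "pc (Suc (length ys)) x y"] by (auto simp: full_comp_snoc)
qed

lemma full_comp_units: "\<forall>y\<in>set ys. y = u \<Longrightarrow> x \<in> C \<Longrightarrow> length ys \<le> ar x \<Longrightarrow> full_comp P x ys = x"
  by (induction ys arbitrary: x rule: rev_induct) (simp_all add: full_comp_snoc pc_unit_right)

lemma full_comp_pc_commute:
  "set zs \<subseteq> C \<Longrightarrow> w \<in> C \<Longrightarrow> e \<in> C \<Longrightarrow> length zs < p \<Longrightarrow> p \<le> ar w \<Longrightarrow>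
   full_comp P (pc p w e) zs = pc (p + sum_list (map ar zs) - length zs) (full_comp P w zs) e"
proof (induction zs arbitrary: w p rule: rev_induct)
  case Nil
  then show ?case by simp
next
  case (snoc z zs)
  let ?n = "length zs"
  have z: "z \<in> C" "1 \<le> ar z"
    using snoc arity_pos by auto
  have "full_comp P (pc p w e) (zs @ [z]) = full_comp P (pc (p + ar z - 1) (pc (Suc ?n) w z) e) zs"
    using pc_commute[of w z e "Suc ?n" p] snoc z by (simp add: full_comp_snoc)
  also have "\<dots> = pc (p + ar z - 1 + sum_list (map ar zs) - ?n) (full_comp P (pc (Suc ?n) w z) zs) e"
    using snoc.IH[of "pc (Suc ?n) w z" "p + ar z - 1"] snoc.prems pc_in_carrier arity_pc z
    by auto
  also have "\<dots> = pc (p + sum_list (map ar (zs @ [z])) - length (zs @ [z])) (full_comp P w (zs @ [z])) e"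
    using snoc.prems z by (simp add: full_comp_snoc add_ac)
  finally show ?case .
qed

lemma full_comp_pc_nested:
  "set as \<subseteq> C \<Longrightarrow> set bs \<subseteq> C \<Longrightarrow> x \<in> C \<Longrightarrow> y \<in> C \<Longrightarrow> e \<in> C \<Longrightarrow>
   length as + 1 + length bs \<le> ar x \<Longrightarrow> 1 \<le> j \<Longrightarrow> j \<le> ar y \<Longrightarrow>
   full_comp P x (as @ pc j y e # bs) = pc (sum_list (map ar as) + j) (full_comp P x (as @ y # bs)) e"
proof (induction bs arbitrary: x rule: rev_induct)
  case Nil
  let ?n = "length as"
  have "full_comp P x (as @ [pc j y e]) = full_comp P (pc (?n + j) (pc (Suc ?n) x y) e) as"
    using pc_assoc[of x y e "Suc ?n" j] Nil by (simp add: full_comp_snoc)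
  also have "\<dots> = pc (?n + j + sum_list (map ar as) - ?n) (full_comp P (pc (Suc ?n) x y) as) e"
    using full_comp_pc_commute[of as "pc (Suc ?n) x y" e "?n + j"] Nil pc_in_carrier arity_pc
    by auto
  finally show ?case by (simp add: full_comp_snoc add_ac)
next
  case (snoc b bs)
  let ?m = "length (as @ pc j y e # bs)"
  have "full_comp P x (as @ pc j y e # bs @ [b]) = full_comp P (pc (Suc ?m) x b) (as @ pc j y e # bs)"
    using full_comp_snoc[of x "as @ pc j y e # bs" b] by simp
  also have "\<dots> = pc (sum_list (map ar as) + j) (full_comp P (pc (Suc ?m) x b) (as @ y # bs)) e"
    using snoc.IH[of "pc (Suc ?m) x b"] snoc.prems pc_in_carrier arity_pc arity_pos[of b]
    by auto
  also have "\<dots> = pc (sum_list (map ar as) + j) (full_comp P x (as @ y # bs @ [b])) e"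
    using full_comp_snoc[of x "as @ y # bs" b] by simp
  finally show ?case .
qed


lemma eval_tree_closed:
  "G \<subseteq> C \<Longrightarrow> tree_over P G t \<Longrightarrow> eval_tree P t \<in> C \<and> ar (eval_tree P t) = leaves t"
proof (induction t)
  case Leaf
  then show ?case by (simp add: unit_in_carrier arity_unit)
next
  case (Node g ts)
  then have "set (map (eval_tree P) ts) \<subseteq> C" "map ar (map (eval_tree P) ts) = map leaves ts"
    by auto
  moreover have "g \<in> C" "ar g = length ts"
    using Node.prems by auto
  ultimately show ?case
    using full_comp_closed[of "map (eval_tree P) ts" g] by (simp del: map_map)
qed

lemma eval_tree_graft:
  assumes "G \<subseteq> C" "tree_over P G t" "tree_over P G s" "1 \<le> j" "j \<le> leaves t"
  shows "eval_tree P (graft t j s) = pc j (eval_tree P t) (eval_tree P s)"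
  using assms(2,4,5)
proof (induction t arbitrary: j)
  case Leaf
  then show ?case
    using eval_tree_closed[OF assms(1,3)] by (simp add: pc_unit_left)
next
  case (Node g ts)
  obtain as t bs j' where split: "ts = as @ t # bs" "graft_list ts j s = as @ graft t j' s # bs"
      "j = sum_list (map leaves as) + j'" "1 \<le> j'" "j' \<le> leaves t"
    using graft_list_split[of j ts s] Node.prems by auto
  have subtrees: "\<forall>x\<in>set ts. tree_over P G x" and g: "g \<in> C" "ar g = length ts"
    using Node.prems assms(1) by auto
  let ?ev = "map (eval_tree P)"
  have "set (?ev as) \<subseteq> C" "set (?ev bs) \<subseteq> C" "eval_tree P t \<in> C"
      "map ar (?ev as) = map leaves as" "ar (eval_tree P t) = leaves t"
    using subtrees split eval_tree_closed[OF assms(1)] by auto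
  moreover have "eval_tree P s \<in> C"
    using eval_tree_closed[OF assms(1,3)] by simp
  moreover have "eval_tree P (graft t j' s) = pc j' (eval_tree P t) (eval_tree P s)"
    using Node.IH[of t j'] split subtrees by auto
  ultimately show ?case
    using full_comp_pc_nested[of "?ev as" "?ev bs" g "eval_tree P t" "eval_tree P s" j'] split g
    by (simp del: map_map)
qed

definition decomposable :: "'a \<Rightarrow> bool" where
  "decomposable x \<longleftrightarrow>
     (\<exists>c\<in>C. \<exists>d\<in>C. \<exists>j. 2 \<le> ar c \<and> 2 \<le> ar d \<and> 1 \<le> j \<and> j \<le> ar c \<and> x = pc j c d)"

definition indecomposables :: "'a set" where
  "indecomposables = {x \<in> C. 2 \<le> ar x \<and> \<not> decomposable x}"

lemma indecomposables_subset_carrier: "indecomposables \<subseteq> C"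
  by (auto simp: indecomposables_def)

lemma not_indecomposableE:
  assumes "x \<in> C" "x \<noteq> u" "x \<notin> indecomposables"
  obtains c d j where "c \<in> C" "d \<in> C" "1 \<le> j" "j \<le> ar c" "x = pc j c d"
    "ar c < ar x" "ar d < ar x"
proof -
  from assms obtain c d j where "c \<in> C" "d \<in> C" "2 \<le> ar c" "2 \<le> ar d" "1 \<le> j" "j \<le> ar c"
      "x = pc j c d"
    using arity_ge_two by (auto simp: indecomposables_def decomposable_def)
  moreover from this have "ar x = ar c + ar d - 1"
    using arity_pc by simp
  ultimately show thesis
    using that by simp
qed

lemma ex_tree_over_indecomposables:
  "x \<in> C \<Longrightarrow> \<exists>t. tree_over P indecomposables t \<and> eval_tree P t = x"
proof (induction "ar x" arbitrary: x rule: less_induct)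
  case less
  consider "x = u" | "x \<in> indecomposables" | "x \<noteq> u" "x \<notin> indecomposables"
    by blast
  then show ?case
  proof cases
    case 1
    then show ?thesis by (intro exI[of _ Leaf]) simp
  next
    case 2
    have "full_comp P x (replicate (ar x) u) = x"
      using full_comp_units less.prems by simp
    with 2 show ?thesis
      by (intro exI[of _ "Node x (replicate (ar x) Leaf)"]) (simp add: map_replicate_const)
  next
    case 3
    then obtain c d j where cd: "c \<in> C" "d \<in> C" "1 \<le> j" "j \<le> ar c" "x = pc j c d"
        "ar c < ar x" "ar d < ar x"
      using not_indecomposableE less.prems by blast
    obtain tc td where "tree_over P indecomposables tc" "eval_tree P tc = c"
        "tree_over P indecomposables td" "eval_tree P td = d"
      using less.hyps cd by meson
    moreover from this have "leaves tc = ar c"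
      using eval_tree_closed[OF indecomposables_subset_carrier] by metis
    ultimately show ?thesis
      using cd tree_over_graft eval_tree_graft[OF indecomposables_subset_carrier] by metis
  qed
qed

lemma generates_indecomposables: "generates P indecomposables"
  unfolding generates_def using indecomposables_subset_carrier ex_tree_over_indecomposables
  by blast

text \<open>Removing the subtree \<open>t\<close> leaves a tree of arity at least 2 onto which \<open>t\<close> is grafted
back.\<close>

lemma decomposable_eval_tree_Node:
  assumes "G \<subseteq> C" and tree: "tree_over P G (Node g (as @ t # bs))"
    and "g \<noteq> u" "eval_tree P t \<noteq> u"
  shows "decomposable (eval_tree P (Node g (as @ t # bs)))"
proof -
  let ?rest = "Node g (as @ Leaf # bs)"
  let ?j = "sum_list (map leaves as) + 1"
  have subtrees: "\<forall>x\<in>set (as @ t # bs). tree_over P G x" and g: "g \<in> C"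
    using tree assms(1) by auto
  have rest: "tree_over P G ?rest"
    using tree by auto
  have tC: "eval_tree P t \<in> C"
    using subtrees eval_tree_closed[OF assms(1)] by simp
  note t = tC arity_ge_two[OF tC assms(4)]
  have "\<forall>x\<in>set (as @ Leaf # bs). 1 \<le> leaves x"
    using subtrees eval_tree_closed[OF assms(1)] arity_pos by fastforce
  then have "ar g \<le> leaves ?rest"
    using length_le_sum_leaves[of "as @ Leaf # bs"] tree by simp
  then have "2 \<le> ar (eval_tree P ?rest)" "?j \<le> ar (eval_tree P ?rest)" "eval_tree P ?rest \<in> C"
    using eval_tree_closed[OF assms(1) rest] arity_ge_two[OF g assms(3)] by auto
  moreover have "graft ?rest ?j t = Node g (as @ t # bs)"
    using graft_list_append[of 1 as "Leaf # bs" t] by simp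
  then have "eval_tree P (Node g (as @ t # bs)) = pc ?j (eval_tree P ?rest) (eval_tree P t)"
    using eval_tree_graft[OF assms(1) rest, of t ?j] subtrees by auto
  ultimately show ?thesis
    using t unfolding decomposable_def by fastforce
qed

lemma eval_tree_trichotomy:
  "G \<subseteq> C \<Longrightarrow> tree_over P G t \<Longrightarrow>
   eval_tree P t = u \<or> eval_tree P t \<in> G \<or> decomposable (eval_tree P t)"
proof (induction t)
  case Leaf
  then show ?case by simp
next
  case (Node g ts)
  have g: "g \<in> G" "g \<in> C" "ar g = length ts" and subtrees: "\<forall>x\<in>set ts. tree_over P G x"
    using Node.prems by auto
  show ?case
  proof (cases "\<forall>t\<in>set ts. eval_tree P t = u")
    case True
    then have "eval_tree P (Node g ts) = g"
      using full_comp_units[of "map (eval_tree P) ts" g] g by auto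
    with g show ?thesis by simp
  next
    case False
    then obtain as t bs where ts: "ts = as @ t # bs" and t: "eval_tree P t \<noteq> u"
      by (metis split_list)
    show ?thesis
    proof (cases "g = u")
      case True
      with g ts have "ts = [t]"
        using arity_unit by simp
      with True subtrees eval_tree_closed[OF Node.prems(1)]
      have "eval_tree P (Node g ts) = eval_tree P t"
        by (simp add: full_comp_def pc_unit_left)
      then show ?thesis
        using Node.IH[of t] Node.prems(1) subtrees ts by auto
    next
      case False
      then show ?thesis
        using decomposable_eval_tree_Node[OF Node.prems(1)] Node.prems(2) ts t by simp
    qed
  qed
qed

lemma indecomposables_subset_generating: "generates P G \<Longrightarrow> indecomposables \<subseteq> G"
proof
  fix x
  assume G: "generates P G" and x: "x \<in> indecomposables"
  then obtain t where "tree_over P G t" "eval_tree P t = x"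
    using indecomposables_subset_carrier unfolding generates_def by blast
  moreover have "x \<noteq> u"
    using x arity_unit by (auto simp: indecomposables_def)
  ultimately show "x \<in> G"
    using G x eval_tree_trichotomy[of G t] by (auto simp: generates_def indecomposables_def)
qed

lemma gens_eq_indecomposables: "gens P = indecomposables"
  unfolding gens_def minimal_generating_def
  by (rule the_equality)
    (use generates_indecomposables indecomposables_subset_generating in blast)+

lemma gens_arity: "a \<in> gens P \<Longrightarrow> a \<in> C \<and> 2 \<le> ar a"
  by (simp add: gens_eq_indecomposables indecomposables_def)

lemma prefix_le_carrier: "prefix_le P x y \<Longrightarrow> x \<in> C \<and> y \<in> C"
  by (induction rule: prefix_le.induct) (auto dest: gens_arity intro: pc_in_carrier)

lemma prefix_le_arity_less: "prefix_le P x y \<Longrightarrow> x = y \<or> ar x < ar y"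
proof (induction rule: prefix_le.induct)
  case (refl x)
  then show ?case by simp
next
  case (step x y a i)
  then have "ar y < ar (pc i y a)"
    using prefix_le_carrier[OF step.hyps(1)] gens_arity[OF step.hyps(2)] arity_pc by auto
  with step.IH show ?case by auto
qed

lemma prefix_le_antisym:
  assumes "prefix_le P x y" "prefix_le P y x"
  shows "x = y"
  using prefix_le_arity_less[OF assms(1)] prefix_le_arity_less[OF assms(2)] by auto

lemma partial_order_prefix_rel: "partial_order_on C (prefix_rel P)"
  unfolding partial_order_on_def preorder_on_def
proof (intro conjI)
  show "prefix_rel P \<subseteq> C \<times> C"
    unfolding prefix_rel_def using prefix_le_carrier by blast
  show "refl_on C (prefix_rel P)"
    unfolding refl_on_def prefix_rel_def using prefix_le.refl[of _ P] by blast
  show "trans (prefix_rel P)"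
    unfolding trans_def prefix_rel_def using prefix_le_trans[of P] by blast
  show "antisym (prefix_rel P)"
    unfolding antisym_def prefix_rel_def by (auto intro: prefix_le_antisym)
qed

lemma prefix_le_pc: "b \<in> C \<Longrightarrow> z \<in> C \<Longrightarrow> 1 \<le> i \<Longrightarrow> i \<le> ar z \<Longrightarrow> prefix_le P z (pc i z b)"
proof (induction "ar b" arbitrary: b z i rule: less_induct)
  case less
  consider "b = u" | "b \<in> indecomposables" | "b \<noteq> u" "b \<notin> indecomposables"
    by blast
  then show ?case
  proof cases
    case 1
    then show ?thesis
      using less.prems pc_unit_right[of z i] prefix_le.refl[of z P] by simp
  next
    case 2
    then show ?thesis
      using less.prems prefix_le.step[OF prefix_le.refl, of z P b i]
      by (simp add: gens_eq_indecomposables)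
  next
    case 3
    then obtain c d j where cd: "c \<in> C" "d \<in> C" "1 \<le> j" "j \<le> ar c" "b = pc j c d"
        "ar c < ar b" "ar d < ar b"
      using not_indecomposableE less.prems by blast
    then have "pc i z b = pc (i + j - 1) (pc i z c) d"
      using pc_assoc[of z c d i j] less.prems by simp
    moreover have "prefix_le P z (pc i z c)"
      using less.hyps[OF cd(6,1) less.prems(2-4)] .
    moreover have "prefix_le P (pc i z c) (pc (i + j - 1) (pc i z c) d)"
      using less.hyps[OF cd(7,2), of "pc i z c" "i + j - 1"] cd less.prems
        pc_in_carrier[of z c i] arity_pc[of z c i] by simp
    ultimately show ?thesis
      using prefix_le_trans[of P z "pc i z c"] by simp
  qed
qed

end

lemma reduced_operad_if_homogeneous: "is_operad P \<Longrightarrow> homogeneous P \<Longrightarrow> reduced_operad P"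
  unfolding reduced_operad_def homogeneous_def by blast

lemma prefix_le_operad_hom:
  assumes "reduced_operad P" "reduced_operad Q" "operad_hom P Q \<psi>" "prefix_le P x y"
  shows "prefix_le Q (\<psi> x) (\<psi> y)"
  using assms(4)
proof (induction rule: prefix_le.induct)
  case (refl x)
  then show ?case
    using assms(3) prefix_le.refl unfolding operad_hom_def by metis
next
  case (step x y a i)
  have "y \<in> ocarrier P" "a \<in> ocarrier P"
    using reduced_operad.prefix_le_carrier[OF assms(1) step.hyps(1)]
      reduced_operad.gens_arity[OF assms(1) step.hyps(2)] by auto
  with step.hyps assms(3) have "\<psi> (ocomp P i y a) = ocomp Q i (\<psi> y) (\<psi> a)"
      "\<psi> y \<in> ocarrier Q" "\<psi> a \<in> ocarrier Q" "oar Q (\<psi> y) = oar P y"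
    unfolding operad_hom_def by auto
  with step.hyps have "prefix_le Q (\<psi> y) (\<psi> (ocomp P i y a))"
    using reduced_operad.prefix_le_pc[OF assms(2)] by simp
  then show ?case
    using prefix_le_trans[OF step.IH] by simp
qed

text \<open>Preservation of injections and surjections is immediate, as the functor keeps the
underlying maps.\<close>

theorem theorem4p6:
  fixes P :: "'a operad" and Q :: "'b operad" and \<psi> :: "'a \<Rightarrow> 'b"
  shows
  "(is_operad P \<and> homogeneous P \<and> finitely_generated P \<longrightarrow>
      partial_order_on (ocarrier P) (prefix_rel P)) \<and>
   (is_operad P \<and> homogeneous P \<and> finitely_generated P \<and>
    is_operad Q \<and> homogeneous Q \<and> finitely_generated Q \<and>
    operad_hom P Q \<psi> \<longrightarrow>
      (\<forall>x y. prefix_le P x y \<longrightarrow> prefix_le Q (\<psi> x) (\<psi> y)) \<and>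
      (inj_on \<psi> (ocarrier P) \<longrightarrow> inj_on \<psi> (ocarrier P)) \<and>
      (\<psi> ` ocarrier P = ocarrier Q \<longrightarrow> \<psi> ` ocarrier P = ocarrier Q))"
proof (intro conjI impI allI)
  assume "is_operad P \<and> homogeneous P \<and> finitely_generated P"
  then show "partial_order_on (ocarrier P) (prefix_rel P)"
    by (simp add: reduced_operad_if_homogeneous reduced_operad.partial_order_prefix_rel)
next
  fix x y
  assume "is_operad P \<and> homogeneous P \<and> finitely_generated P \<and>
    is_operad Q \<and> homogeneous Q \<and> finitely_generated Q \<and> operad_hom P Q \<psi>"
    and "prefix_le P x y"
  then show "prefix_le Q (\<psi> x) (\<psi> y)"
    by (meson reduced_operad_if_homogeneous prefix_le_operad_hom)
qed auto

end
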